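(* Let $T$ be a positive odd integer and let $q\in\mathbb{C}$ with $|q|<1$. For $u\in\mathbb{C}$ define \[ \mathcal{M}_T(u,q) := \frac{1-e^{2 \pi i u}}{(q)_\infty}\sum_{n \in \mathbb{Z}}(-1)^{n}\frac{q^{\frac{n}{2}(Tn+1)}}{1-e^{2 \pi i u}q^n}\] (as a function of $u$ near $0$; the singularity at $u=0$ of the $n=0$ term is removable). Then for every integer $r>0$, the coefficient of $\frac{(2\pi i u)^r}{r!}$ in the Taylor expansion of $u\mapsto \mathcal{M}_T(u,q)$ at $u=0$ equals \[ M_T^r(q)=\sum_{n =0}^\infty m_T^r(n) q^n.\]
   Context: $(q)_\infty:=\prod_{k=1}^\infty(1-q^k)$. For a positive odd integer $T$, integers $m$ and $n\ge0$, the numbers $N_T(m,n)$ are defined by \[ \sum_{n=0}^\infty N_T(m,n)q^n=\frac{1}{(q)_\infty} \sum_{n=1}^\infty (-1)^{n-1}q^{\frac{n}{2}(Tn-1)+|m|n}(1-q^n),\] and for a positive integer $r$, $m^r_T(n):=\sum_{m=-n}^n m^r N_T(m,n)$. *)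

theory Defs
  imports "HOL-Complex_Analysis.Complex_Analysis" "HOL-Computational_Algebra.Formal_Power_Series"
begin

text \<open>(q)_infinity as a formal power series: its k-th coefficient equals the k-th
  coefficient of the finite product over j = 1..k of (1 - q^j).\<close>
definition qpoch_fps :: "real fps" where
  "qpoch_fps = Abs_fps (\<lambda>k. fps_nth (\<Prod>j\<in>{1..k}. 1 - fps_X ^ j) k)"

text \<open>The series sum over n >= 1 of (-1)^(n-1) q^(n(Tn-1)/2 + |m| n) (1 - q^n).
  Exponents are at least n - 1, so only n <= k+1 contribute to the coefficient of q^k.\<close>
definition NT_series :: "nat \<Rightarrow> int \<Rightarrow> real fps" where
  "NT_series T m = Abs_fps (\<lambda>k. \<Sum>n\<in>{1..k+1}. (-1) ^ (n - 1) *
      ((if k = n * (T * n - 1) div 2 + nat \<bar>m\<bar> * n then 1 else 0)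
     - (if k = n * (T * n - 1) div 2 + nat \<bar>m\<bar> * n + n then 1 else 0)))"

definition N_T :: "nat \<Rightarrow> int \<Rightarrow> nat \<Rightarrow> real" where
  "N_T T m n = fps_nth (inverse qpoch_fps * NT_series T m) n"

definition m_T :: "nat \<Rightarrow> nat \<Rightarrow> nat \<Rightarrow> real" where
  "m_T T r n = (\<Sum>m\<in>{- int n..int n}. of_int m ^ r * N_T T m n)"

definition M_T :: "nat \<Rightarrow> nat \<Rightarrow> complex \<Rightarrow> complex" where
  "M_T T r q = (\<Sum>n. complex_of_real (m_T T r n) * q ^ n)"

definition scriptM :: "nat \<Rightarrow> complex \<Rightarrow> complex \<Rightarrow> complex" where
  "scriptM T q u = (1 - exp (2 * pi * \<i> * u)) / prodinf (\<lambda>k. 1 - q ^ (k + 1)) *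
     (\<Sum>\<^sub>\<infinity>n::int. (-1) ^ nat \<bar>n\<bar> * q ^ nat (n * (int T * n + 1) div 2)
        / (1 - exp (2 * pi * \<i> * u) * q powi n))"

end

theory Submission
  imports Defs
begin

text \<open>Write \<open>\<zeta> = e^(2\<pi>iu)\<close>. Expanding every \<open>1/(1 - \<zeta> q^n)\<close> into a geometric series and summing
  the resulting absolutely convergent double series the other way round gives the partial fraction
  identity
    \<open>(1 - \<zeta>) \<Sum>_n (-1)^n q^(n(Tn+1)/2) / (1 - \<zeta> q^n) = c + \<Sum>_(m \<ge> 1) (\<zeta>^m + \<zeta>^(-m)) F_m(q)\<close>,
  where \<open>F_m(q) = \<Sum>_(n \<ge> 1) (-1)^(n-1) q^(n(Tn-1)/2 + mn) (1 - q^n)\<close> is \<open>(q)_\<infinity>\<close> times the generating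
  function of \<open>N_T(m, n)\<close>. So near \<open>u = 0\<close> the function \<open>\<M>_T(u, q)\<close> is a cosine series
  \<open>\<Sum>_m K_m (e^(2\<pi>imu) + e^(-2\<pi>imu))\<close> with geometrically decaying coefficients
  \<open>K_m = F_m(q) / (q)_\<infinity>\<close> (\<open>m \<ge> 1\<close>). It may be differentiated term by term, and its \<open>r\<close>-th derivative
  at \<open>0\<close> is \<open>(2\<pi>i)^r \<Sum>_(m \<ge> 1) (m^r + (-m)^r) F_m(q) / (q)_\<infinity>\<close>. Reordering the triple series over
  \<open>m\<close>, \<open>n\<close> and the two monomials of \<open>1 - q^n\<close> by exponents identifies this with \<open>(2\<pi>i)^r M_T^r(q)\<close>.\<close>

unbundle no vec_syntax

lemma summable_power_times_geometric:
  fixes x :: real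
  assumes "0 \<le> x" "x < 1"
  shows "summable (\<lambda>k. (real k + 1) ^ d * x ^ k)"
proof -
  have "conv_radius (\<lambda>k. (real k + 1) ^ d) = 1"
  proof (rule conv_radius_ratio_limit_nonzero)
    have "(\<lambda>n. (real (Suc n) / real (Suc (Suc n))) ^ d) \<longlonglongrightarrow> 1 ^ d"
      by (intro tendsto_power LIMSEQ_Suc[OF LIMSEQ_n_over_Suc_n])
    then show "(\<lambda>n. norm ((real n + 1) ^ d) / norm ((real (Suc n) + 1) ^ d)) \<longlonglongrightarrow> 1"
      by (simp add: power_divide add_ac)
  qed auto
  then show ?thesis
    using assms by (intro summable_in_conv_radius) auto
qed

lemma summable_on_product_nonneg:
  fixes f :: "'a \<Rightarrow> real" and g :: "'b \<Rightarrow> real"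
  assumes "f summable_on A" "g summable_on B" "\<And>x. f x \<ge> 0" "\<And>y. g y \<ge> 0"
  shows "(\<lambda>(x, y). f x * g y) summable_on A \<times> B"
proof (rule summable_on_SigmaI[where g = "\<lambda>x. f x * infsum g B"])
  show "((\<lambda>y. case (x, y) of (x, y) \<Rightarrow> f x * g y) has_sum f x * infsum g B) B" for x
    using has_sum_cmult_right[OF has_sum_infsum[OF assms(2)], of "f x"] by simp
  show "(\<lambda>x. f x * infsum g B) summable_on A"
    by (rule summable_on_cmult_left[OF assms(1)])
qed (use assms in auto)

lemma has_sum_diff:
  fixes f g :: "'a \<Rightarrow> 'b :: topological_ab_group_add"
  assumes "(f has_sum a) A" "(g has_sum b) A"
  shows "((\<lambda>x. f x - g x) has_sum (a - b)) A"
  using has_sum_add[OF assms(1) has_sum_uminus[THEN iffD2, of g A "- b"]] assms(2) by simp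

lemma norm_summable_imp_has_sum_suminf:
  fixes f :: "nat \<Rightarrow> 'a :: banach"
  assumes "summable (\<lambda>n. norm (f n))"
  shows "(f has_sum suminf f) UNIV"
  by (rule norm_summable_imp_has_sum[OF assms summable_sums[OF summable_norm_cancel[OF assms]]])

lemma has_sum_int_split:
  fixes f :: "int \<Rightarrow> 'a :: topological_comm_monoid_add"
  assumes "((\<lambda>a. f (int a + 1)) has_sum A) UNIV" "((\<lambda>a. f (- int a - 1)) has_sum B) UNIV"
  shows "(f has_sum (f 0 + (A + B))) UNIV"
proof -
  have "inj (\<lambda>a::nat. int a + 1)" "inj (\<lambda>a::nat. - int a - 1)"
    by (auto simp: inj_def)
  then have "(f has_sum A) (range (\<lambda>a. int a + 1))" "(f has_sum B) (range (\<lambda>a. - int a - 1))"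
    using assms by (simp_all add: has_sum_reindex o_def)
  then have nonzero: "(f has_sum (A + B)) (range (\<lambda>a. int a + 1) \<union> range (\<lambda>a. - int a - 1))"
    by (rule has_sum_Un_disjoint) auto
  have zero: "(f has_sum f 0) {0}"
    using has_sum_finite[of "{0}" f] by simp
  have "(f has_sum (f 0 + (A + B))) ({0} \<union> (range (\<lambda>a. int a + 1) \<union> range (\<lambda>a. - int a - 1)))"
    by (rule has_sum_Un_disjoint[OF zero nonzero]) auto
  also have "{0} \<union> (range (\<lambda>a. int a + 1) \<union> range (\<lambda>a. - int a - 1)) = UNIV"
  proof -
    have "n = 0 \<or> n \<in> range (\<lambda>a. int a + 1) \<or> n \<in> range (\<lambda>a. - int a - 1)" for n :: int
    proof (cases "n > 0")
      case True
      then have "n = int (nat (n - 1)) + 1"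
        by simp
      then show ?thesis
        by blast
    next
      case False
      then have "n = 0 \<or> n = - int (nat (- n - 1)) - 1"
        by simp
      then show ?thesis
        by blast
    qed
    then show ?thesis
      by blast
  qed
  finally show ?thesis .
qed

lemma sums_power_times_power_diff:
  fixes w x :: complex
  assumes "norm (w * x) < 1"
  shows "(\<lambda>b. w ^ (b + 1) * (x ^ (b + 1) - x ^ b)) sums ((1 - w) / (1 - w * x) - 1)"
proof -
  have "(\<lambda>b. (w * x - w) * (w * x) ^ b) sums ((w * x - w) * (1 / (1 - w * x)))"
    using geometric_sums[OF assms] by (intro sums_mult) simp
  moreover have "1 - w * x \<noteq> 0"
    using assms by auto
  then have "(w * x - w) * (1 / (1 - w * x)) = (1 - w) / (1 - w * x) - 1"
    by (simp add: field_simps)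
  moreover have "(w * x - w) * (w * x) ^ b = w ^ (b + 1) * (x ^ (b + 1) - x ^ b)" for b
    by (simp add: power_mult_distrib algebra_simps)
  ultimately show ?thesis
    by simp
qed

section \<open>The Euler product\<close>

definition qpoch_inf :: "complex \<Rightarrow> complex" where
  "qpoch_inf z = prodinf (\<lambda>k. 1 - z ^ (k + 1))"

lemma norm_power_Suc_less_one:
  fixes z :: "'a :: real_normed_div_algebra"
  assumes "norm z < 1"
  shows "norm (z ^ (k + 1)) < 1"
  unfolding norm_power using assms by (simp add: power_less_one_iff del: power_Suc)

lemma convergent_prod_qpoch:
  fixes z :: complex
  assumes "norm z < 1"
  shows "convergent_prod (\<lambda>k. 1 - z ^ (k + 1))"
proof -
  have "convergent_prod (\<lambda>k. 1 + (- (z ^ (k + 1))))"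
  proof (rule summable_imp_convergent_prod_complex)
    show "summable (\<lambda>k. norm (- (z ^ (k + 1))))"
      using assms summable_mult[OF summable_geometric, of "norm z" "norm z"] by (simp add: norm_power norm_mult)
    show "- (z ^ (k + 1)) \<noteq> -1" for k
      using norm_power_Suc_less_one[OF assms, of k] by auto
  qed
  then show ?thesis by simp
qed

lemma qpoch_inf_nonzero:
  assumes "norm z < 1"
  shows "qpoch_inf z \<noteq> 0"
  unfolding qpoch_inf_def
proof (rule prodinf_nonzero[OF convergent_prod_qpoch[OF assms]])
  show "1 - z ^ (k + 1) \<noteq> 0" for k
    using norm_power_Suc_less_one[OF assms, of k] by auto
qed

lemma uniform_limit_qpoch_inf:
  assumes "0 \<le> R" "R < 1"
  shows "uniform_limit (cball 0 R) (\<lambda>N z. \<Prod>k<N. 1 - z ^ (k + 1)) qpoch_inf sequentially"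
proof -
  have "uniformly_convergent_on (cball 0 R) (\<lambda>N (z::complex). \<Prod>k<N. 1 - z ^ (k + 1))"
  proof (rule uniformly_convergent_on_prod'[where f = "\<lambda>k z. 1 - z ^ (k + 1)"])
    show "uniformly_convergent_on (cball 0 R) (\<lambda>N (z::complex). \<Sum>k<N. norm (1 - z ^ (k + 1) - 1))"
    proof (rule Weierstrass_m_test'_ev)
      show "\<forall>\<^sub>F k in sequentially. \<forall>z::complex\<in>cball 0 R. norm (norm (1 - z ^ (k + 1) - 1)) \<le> R ^ (k + 1)"
        by (intro always_eventually allI ballI) (auto simp: norm_power simp del: power_Suc intro!: power_mono)
      show "summable (\<lambda>k. R ^ (k + 1))"
        using assms summable_mult[OF summable_geometric, of R R] by simp
    qed
  qed (auto intro!: continuous_intros)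
  then obtain g where g: "uniform_limit (cball 0 R) (\<lambda>N (z::complex). \<Prod>k<N. 1 - z ^ (k + 1)) g sequentially"
    by (auto simp: uniformly_convergent_on_def)
  have lim: "g z = qpoch_inf z" if z: "z \<in> cball 0 R" for z
  proof -
    have "(\<lambda>N. \<Prod>k<Suc N. 1 - z ^ (k + 1)) \<longlonglongrightarrow> g z"
      using LIMSEQ_Suc[OF tendsto_uniform_limitI[OF g z]] .
    moreover have "(\<lambda>N. \<Prod>k<Suc N. 1 - z ^ (k + 1)) \<longlonglongrightarrow> qpoch_inf z"
      using z assms convergent_prod_LIMSEQ[OF convergent_prod_qpoch, of z]
      unfolding lessThan_Suc_atMost qpoch_inf_def by auto
    ultimately show ?thesis
      using LIMSEQ_unique by blast
  qed
  show ?thesis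
    by (rule uniform_limit_cong'[THEN iffD1, OF _ _ g]) (simp_all add: lim)
qed

lemma holomorphic_qpoch_inf: "qpoch_inf holomorphic_on ball 0 1"
proof (rule holomorphic_uniform_sequence)
  fix z :: complex
  assume z: "z \<in> ball 0 1"
  define d where "d = (1 - norm z) / 2"
  have d: "d > 0" "0 \<le> norm z + d" "norm z + d < 1"
    using z by (auto simp: d_def field_simps)
  have sub: "cball z d \<subseteq> cball 0 (norm z + d)"
    by (auto simp: cball_subset_cball_iff)
  have "uniform_limit (cball z d) (\<lambda>N z. \<Prod>k<N. 1 - z ^ (k + 1)) qpoch_inf sequentially"
    using uniform_limit_qpoch_inf[OF d(2,3)] sub by (rule uniform_limit_on_subset)
  moreover have "cball z d \<subseteq> ball 0 1"
    using sub d(3) by auto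
  ultimately show "\<exists>d>0. cball z d \<subseteq> ball 0 1 \<and>
      uniform_limit (cball z d) (\<lambda>N z. \<Prod>k<N. 1 - z ^ (k + 1)) qpoch_inf sequentially"
    using d(1) by blast
qed (auto intro!: holomorphic_intros)

section \<open>The power series of the Euler product\<close>

definition of_real_fps :: "real fps \<Rightarrow> 'a :: real_algebra_1 fps" where
  "of_real_fps F = Abs_fps (\<lambda>n. of_real (F $ n))"

lemma of_real_fps_nth [simp]: "of_real_fps F $ n = of_real (F $ n)"
  by (simp add: of_real_fps_def)

lemma of_real_fps_1 [simp]: "of_real_fps 1 = 1"
  by (rule fps_ext) (simp add: fps_one_nth)

lemma of_real_fps_X_power [simp]: "of_real_fps (fps_X ^ n) = fps_X ^ n"
  by (rule fps_ext) simp

lemma of_real_fps_diff [simp]: "of_real_fps (F - G) = of_real_fps F - of_real_fps G"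
  by (rule fps_ext) simp

lemma of_real_fps_mult: "of_real_fps (F * G) = of_real_fps F * of_real_fps G"
  by (rule fps_ext) (simp add: fps_mult_nth)

lemma of_real_fps_prod: "of_real_fps (\<Prod>k\<in>A. f k) = (\<Prod>k\<in>A. of_real_fps (f k) :: 'a :: {real_algebra_1, comm_ring_1} fps)"
  by (induction A rule: infinite_finite_induct) (auto simp: of_real_fps_mult)

lemma of_real_fps_inverse:
  assumes "F $ 0 \<noteq> 0"
  shows "of_real_fps (inverse F) = (inverse (of_real_fps F) :: 'a :: real_field fps)"
proof -
  have "of_real_fps F * of_real_fps (inverse F) = (1 :: 'a fps)"
    using inverse_mult_eq_1'[OF assms] by (metis of_real_fps_mult of_real_fps_1)
  then show ?thesis
    by (intro fps_inverse_unique[symmetric])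
qed

lemma fps_mult_one_minus_X_power_nth:
  fixes F :: "'a :: comm_ring_1 fps"
  assumes "n < m"
  shows "(F * (1 - fps_X ^ m)) $ n = F $ n"
  using assms by (simp add: algebra_simps fps_X_power_mult_right_nth)

lemma prod_one_minus_X_power_nth_stable:
  assumes "n \<le> N"
  shows "(\<Prod>k<N. 1 - fps_X ^ (k + 1) :: 'a :: comm_ring_1 fps) $ n
       = (\<Prod>k<n. 1 - fps_X ^ (k + 1) :: 'a fps) $ n"
  using assms
proof (induction N)
  case (Suc N)
  show ?case
  proof (cases "n = Suc N")
    case False
    then have "n \<le> N"
      using Suc.prems by simp
    have "(\<Prod>k<Suc N. 1 - fps_X ^ (k + 1) :: 'a fps) $ n
        = ((\<Prod>k<N. 1 - fps_X ^ (k + 1)) * (1 - fps_X ^ (N + 1))) $ n"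
      by simp
    also have "\<dots> = (\<Prod>k<N. 1 - fps_X ^ (k + 1) :: 'a fps) $ n"
      using \<open>n \<le> N\<close> by (intro fps_mult_one_minus_X_power_nth) simp
    finally show ?thesis
      using Suc.IH[OF \<open>n \<le> N\<close>] by simp
  qed simp
qed simp

lemma qpoch_fps_nth: "qpoch_fps $ n = (\<Prod>k<n. 1 - fps_X ^ (k + 1) :: real fps) $ n"
  by (simp add: qpoch_fps_def prod.atLeast1_atMost_eq)

lemma qpoch_fps_nth_0: "qpoch_fps $ 0 = 1"
  by (simp add: qpoch_fps_def)

lemma has_fps_expansion_qpoch_inf: "qpoch_inf has_fps_expansion of_real_fps qpoch_fps"
proof -
  have exp: "qpoch_inf has_fps_expansion fps_expansion qpoch_inf 0"
    using holomorphic_qpoch_inf by (intro has_fps_expansion_fps_expansion) auto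
  have "fps_expansion qpoch_inf 0 = of_real_fps qpoch_fps"
  proof (rule uniform_limit_imp_fps_expansion_eq[where F = sequentially and A = "ball 0 (1/2)"
        and f = "\<lambda>N. \<Prod>k<N. 1 - fps_X ^ (k + 1)" and f' = "\<lambda>N z. \<Prod>k<N. 1 - z ^ (k + 1)"])
    show "(\<lambda>N. \<Prod>k<N. 1 - fps_X ^ (k + 1)) \<longlonglongrightarrow> (of_real_fps qpoch_fps :: complex fps)"
    proof (rule tendsto_fpsI)
      fix n :: nat
      show "\<forall>\<^sub>F N in sequentially. (\<Prod>k<N. 1 - fps_X ^ (k + 1)) $ n = (of_real_fps qpoch_fps :: complex fps) $ n"
        using eventually_ge_at_top[of n]
      proof eventually_elim
        case (elim N)
        have "(\<Prod>k<N. 1 - fps_X ^ (k + 1)) $ n = (\<Prod>k<n. 1 - fps_X ^ (k + 1) :: complex fps) $ n"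
          using elim by (rule prod_one_minus_X_power_nth_stable)
        also have "(\<Prod>k<n. 1 - fps_X ^ (k + 1) :: complex fps) = of_real_fps (\<Prod>k<n. 1 - fps_X ^ (k + 1))"
          by (simp only: of_real_fps_prod of_real_fps_diff of_real_fps_1 of_real_fps_X_power)
        finally show ?case
          by (simp only: of_real_fps_nth qpoch_fps_nth)
      qed
    qed
    show "uniform_limit (ball 0 (1/2)) (\<lambda>N z. \<Prod>k<N. 1 - z ^ (k + 1)) qpoch_inf sequentially"
      by (rule uniform_limit_on_subset[OF uniform_limit_qpoch_inf[of "1/2"]]) auto
    show "\<forall>\<^sub>F N in sequentially. (\<lambda>z. \<Prod>k<N. 1 - z ^ (k + 1)) has_fps_expansion (\<Prod>k<N. 1 - fps_X ^ (k + 1) :: complex fps)"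
      by (intro always_eventually allI has_fps_expansion_prod has_fps_expansion_diff
          has_fps_expansion_1 has_fps_expansion_fps_X_power)
    show "\<forall>\<^sub>F N in sequentially. (\<lambda>z. \<Prod>k<N. 1 - z ^ (k + 1)) holomorphic_on ball 0 (1/2)"
      by (intro always_eventually allI holomorphic_intros)
  qed (use exp in simp_all)
  with exp show ?thesis
    by simp
qed

lemma has_fps_expansion_inverse_qpoch_inf:
  "(\<lambda>z. inverse (qpoch_inf z)) has_fps_expansion of_real_fps (inverse qpoch_fps)"
  using has_fps_expansion_inverse[OF has_fps_expansion_qpoch_inf]
  by (simp add: of_real_fps_inverse qpoch_fps_nth_0)

lemma holomorphic_inverse_qpoch_inf: "(\<lambda>z. inverse (qpoch_inf z)) holomorphic_on ball 0 1"
  using qpoch_inf_nonzero by (intro holomorphic_on_inverse holomorphic_qpoch_inf) auto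

section \<open>The moment series\<close>

lemma NT_series_nth:
  "NT_series T m $ k = (\<Sum>n\<in>{1..k+1}. (-1) ^ (n - 1) *
      ((if k = n * (T * n - 1) div 2 + nat \<bar>m\<bar> * n then 1 else 0)
     - (if k = n * (T * n - 1) div 2 + nat \<bar>m\<bar> * n + n then 1 else 0)))"
  by (simp add: NT_series_def)

lemma NT_series_nth_eq_0:
  assumes "k < nat \<bar>m\<bar>"
  shows "NT_series T m $ k = 0"
  unfolding NT_series_nth
proof (intro sum.neutral ballI)
  fix n assume "n \<in> {1..k+1}"
  then have "nat \<bar>m\<bar> \<le> nat \<bar>m\<bar> * n"
    by simp
  then have "k < n * (T * n - 1) div 2 + nat \<bar>m\<bar> * n"
    using assms by linarith
  then show "(-1) ^ (n - 1) *
      ((if k = n * (T * n - 1) div 2 + nat \<bar>m\<bar> * n then 1 else 0)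
     - (if k = n * (T * n - 1) div 2 + nat \<bar>m\<bar> * n + n then 1 else 0)) = (0::real)"
    by simp
qed

lemma abs_NT_series_nth_le: "\<bar>NT_series T m $ k\<bar> \<le> real k + 1"
proof -
  have "\<bar>NT_series T m $ k\<bar> \<le> (\<Sum>n\<in>{1..k+1}. (1::real))"
    unfolding NT_series_nth by (rule order_trans[OF sum_abs sum_mono]) (auto simp: abs_mult)
  then show ?thesis
    by simp
qed

lemma NT_series_uminus: "NT_series T (- m) = NT_series T m"
  by (simp add: NT_series_def)

definition moment_series :: "nat \<Rightarrow> nat \<Rightarrow> real fps" where
  "moment_series T r = Abs_fps (\<lambda>k. \<Sum>m\<in>{- int k..int k}. of_int m ^ r * NT_series T m $ k)"

lemma m_T_eq_nth: "m_T T r n = (inverse qpoch_fps * moment_series T r) $ n"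
proof -
  have trunc: "(\<Sum>m\<in>{- int n..int n}. of_int m ^ r * NT_series T m $ (n - i))
             = moment_series T r $ (n - i)" if "i \<le> n" for i
    unfolding moment_series_def fps_nth_Abs_fps
    by (rule sum.mono_neutral_right) (use that in \<open>auto simp: NT_series_nth_eq_0\<close>)
  have "m_T T r n = (\<Sum>m\<in>{- int n..int n}. of_int m ^ r *
          (\<Sum>i=0..n. inverse qpoch_fps $ i * NT_series T m $ (n - i)))"
    by (simp add: m_T_def N_T_def fps_mult_nth)
  also have "\<dots> = (\<Sum>i=0..n. inverse qpoch_fps $ i *
          (\<Sum>m\<in>{- int n..int n}. of_int m ^ r * NT_series T m $ (n - i)))"
    by (simp add: sum_distrib_left sum.swap[of _ "{0..n}"] mult_ac)
  also have "\<dots> = (inverse qpoch_fps * moment_series T r) $ n"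
    by (simp add: fps_mult_nth trunc)
  finally show ?thesis .
qed

lemma sum_int_symmetric:
  "(\<Sum>m\<in>{- int k..int k}. f m) = f 0 + (\<Sum>j\<in>{1..k}. f (int j) + f (- int j))"
proof (induction k)
  case (Suc k)
  have "{- int (Suc k)..int (Suc k)} = insert (int (Suc k)) (insert (- int (Suc k)) {- int k..int k})"
    by auto
  then show ?case
    by (simp add: Suc.IH add_ac)
qed simp

definition sym_power :: "nat \<Rightarrow> nat \<Rightarrow> real" where
  "sym_power r j = real j ^ r + (- real j) ^ r"

lemma abs_sym_power_le: "\<bar>sym_power r j\<bar> \<le> 2 * real j ^ r"
  unfolding sym_power_def by (rule order_trans[OF abs_triangle_ineq]) (simp add: power_abs)

lemma moment_series_nth:
  assumes "r > 0"
  shows "moment_series T r $ k = (\<Sum>j\<in>{1..k}. sym_power r j * NT_series T (int j) $ k)"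
  unfolding moment_series_def sum_int_symmetric sym_power_def using assms
  by (simp add: NT_series_uminus algebra_simps)

lemma abs_moment_series_nth_le:
  assumes "r > 0"
  shows "\<bar>moment_series T r $ k\<bar> \<le> 2 * (real k + 1) ^ (r + 2)"
proof -
  have "\<bar>moment_series T r $ k\<bar> \<le> (\<Sum>j\<in>{1..k}. 2 * (real k + 1) ^ r * (real k + 1))"
    unfolding moment_series_nth[OF assms] abs_mult
  proof (rule order_trans[OF sum_abs sum_mono])
    fix j assume j: "j \<in> {1..k}"
    have "\<bar>sym_power r j\<bar> \<le> 2 * (real k + 1) ^ r"
      using j by (intro order_trans[OF abs_sym_power_le]) (simp add: power_mono)
    then show "\<bar>sym_power r j * NT_series T (int j) $ k\<bar> \<le> 2 * (real k + 1) ^ r * (real k + 1)"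
      unfolding abs_mult by (intro mult_mono abs_NT_series_nth_le) auto
  qed
  also have "\<dots> \<le> (real k + 1) * (2 * (real k + 1) ^ r * (real k + 1))"
    by (simp add: mult_right_mono)
  also have "\<dots> = 2 * (real k + 1) ^ (r + 2)"
    by (simp add: power_add power2_eq_square)
  finally show ?thesis .
qed

lemma fps_conv_radius_moment_series:
  assumes "r > 0"
  shows "1 \<le> fps_conv_radius (of_real_fps (moment_series T r) :: complex fps)"
  unfolding fps_conv_radius_def
proof (rule conv_radius_geI_ex')
  fix x :: real
  assume x: "0 < x" "ereal x < 1"
  show "summable (\<lambda>n. (of_real_fps (moment_series T r) :: complex fps) $ n * of_real x ^ n)"
  proof (rule summable_norm_cancel, rule summable_comparison_test')
    show "summable (\<lambda>k. 2 * ((real k + 1) ^ (r + 2) * x ^ k))"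
      using x by (intro summable_mult summable_power_times_geometric) auto
    show "norm (norm ((of_real_fps (moment_series T r) :: complex fps) $ n * of_real x ^ n))
          \<le> 2 * ((real n + 1) ^ (r + 2) * x ^ n)" for n
      using abs_moment_series_nth_le[OF assms, of T n] x
      by (simp add: norm_mult norm_power mult_right_mono)
  qed
qed

section \<open>Reindexing by exponents\<close>

text \<open>The summand of \<open>NT_series T m\<close> with index \<open>n = a + 1\<close> and \<open>|m| = j\<close> is
  \<open>(-1)^a (q^e - q^(e + a + 1))\<close> with \<open>e = NT_exp T a j\<close>.\<close>

definition NT_exp :: "nat \<Rightarrow> nat \<Rightarrow> nat \<Rightarrow> nat" where
  "NT_exp T a j = (a + 1) * (T * (a + 1) - 1) div 2 + j * (a + 1)"

lemma NT_exp_ge: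
  assumes "T > 0"
  shows "a + j \<le> NT_exp T a j"
proof -
  have "a + 1 \<le> T * (a + 1)"
    using mult_le_mono1[of 1 T "a + 1"] assms by simp
  then have "a \<le> T * (a + 1) - 1"
    by linarith
  then have "(a + 1) * a \<le> (a + 1) * (T * (a + 1) - 1)"
    by (rule mult_le_mono2)
  moreover have "2 * a \<le> (a + 1) * a"
    by (cases a) auto
  moreover have "j \<le> j * (a + 1)"
    by simp
  ultimately show ?thesis
    unfolding NT_exp_def by linarith
qed

lemma NT_series_nth_of_nat:
  "NT_series T (int j) $ k = (\<Sum>a\<le>k. (-1) ^ a *
     ((if k = NT_exp T a j then 1 else 0) - (if k = NT_exp T a j + a + 1 then 1 else 0)))"
  unfolding NT_series_nth
  by (simp only: One_nat_def sum.atLeast1_atMost_eq)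
     (simp add: NT_exp_def lessThan_Suc_atMost mult.commute)

text \<open>A summand of the moment series is indexed by \<open>(j, a, b)\<close>: \<open>m = j + 1\<close>, \<open>n = a + 1\<close>,
  and \<open>b\<close> selects the positive or the negative monomial of \<open>q^e (1 - q^n)\<close>.\<close>

definition moment_exp :: "nat \<Rightarrow> nat \<times> nat \<times> bool \<Rightarrow> nat" where
  "moment_exp T = (\<lambda>(j, a, b). NT_exp T a (j + 1) + (if b then 0 else a + 1))"

definition moment_weight :: "nat \<Rightarrow> nat \<times> nat \<times> bool \<Rightarrow> real" where
  "moment_weight r = (\<lambda>(j, a, b). sym_power r (j + 1) * (-1) ^ a * (if b then 1 else -1))"

lemma moment_exp_ge:
  assumes "T > 0"
  shows "a + j + 1 \<le> moment_exp T (j, a, b)"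
  using NT_exp_ge[OF assms, of a "j + 1"] by (simp add: moment_exp_def)

lemma moment_exp_fiber_subset:
  assumes "T > 0"
  shows "{i. moment_exp T i = k} \<subseteq> {..<k} \<times> {..k} \<times> UNIV"
proof
  fix i assume i: "i \<in> {i. moment_exp T i = k}"
  obtain j a b where "i = (j, a, b)"
    by (cases i)
  with i moment_exp_ge[OF assms, of a j b] show "i \<in> {..<k} \<times> {..k} \<times> UNIV"
    by auto
qed

lemma finite_moment_exp_fiber:
  assumes "T > 0"
  shows "finite {i. moment_exp T i = k}"
  using moment_exp_fiber_subset[OF assms] by (rule finite_subset) simp

lemma moment_series_nth_fiber:
  assumes "r > 0" "T > 0"
  shows "moment_series T r $ k = (\<Sum>i | moment_exp T i = k. moment_weight r i)"
proof -
  let ?B = "{..<k} \<times> {..k} \<times> (UNIV :: bool set)"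
  have "{i. moment_exp T i = k} = {i\<in>?B. moment_exp T i = k}"
    using moment_exp_fiber_subset[OF assms(2), of k] by blast
  then have "(\<Sum>i | moment_exp T i = k. moment_weight r i)
      = (\<Sum>i\<in>?B. if moment_exp T i = k then moment_weight r i else 0)"
    by (simp add: sum.inter_filter)
  also have "\<dots> = (\<Sum>j<k. \<Sum>a\<le>k. \<Sum>b\<in>UNIV.
      if moment_exp T (j, a, b) = k then moment_weight r (j, a, b) else 0)"
    by (simp add: sum.cartesian_product)
  also have "\<dots> = (\<Sum>j<k. \<Sum>a\<le>k. sym_power r (j + 1) * ((-1) ^ a *
       ((if k = NT_exp T a (j + 1) then 1 else 0) - (if k = NT_exp T a (j + 1) + a + 1 then 1 else 0))))"
    by (intro sum.cong refl) (auto simp: UNIV_bool moment_exp_def moment_weight_def)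
  also have "\<dots> = (\<Sum>j<k. sym_power r (j + 1) * NT_series T (int (j + 1)) $ k)"
    by (simp only: NT_series_nth_of_nat sum_distrib_left)
  also have "\<dots> = moment_series T r $ k"
    unfolding moment_series_nth[OF assms(1)]
    by (simp only: One_nat_def sum.atLeast1_atMost_eq) simp
  finally show ?thesis ..
qed

section \<open>The moment series at a point of the unit disc\<close>

locale NT_point =
  fixes T :: nat and q :: complex
  assumes T_pos: "T > 0" and norm_q_less_1: "norm q < 1"
begin

definition NT_term :: "nat \<Rightarrow> nat \<Rightarrow> complex" where
  "NT_term a j = (-1) ^ a * (q ^ NT_exp T a j - q ^ (NT_exp T a j + a + 1))"

text \<open>\<open>NT_sum j\<close> is the value at \<open>q\<close> of \<open>NT_series T j\<close>, that is \<open>(q)_\<infinity> \<Sum>_n N_T(j, n) q^n\<close>.\<close>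

definition NT_sum :: "nat \<Rightarrow> complex" where
  "NT_sum j = (\<Sum>a. NT_term a j)"

lemma norm_q_power_le: "m \<le> n \<Longrightarrow> norm (q ^ n) \<le> norm q ^ m"
  unfolding norm_power using norm_q_less_1 by (intro power_decreasing) auto

lemma norm_NT_term_le: "norm (NT_term a j) \<le> 2 * norm q ^ a * norm q ^ j"
proof -
  have "norm (NT_term a j) = norm (q ^ NT_exp T a j - q ^ (NT_exp T a j + a + 1))"
    unfolding NT_term_def norm_mult by (simp add: norm_power)
  also have "\<dots> \<le> norm (q ^ NT_exp T a j) + norm (q ^ (NT_exp T a j + a + 1))"
    by (rule norm_triangle_ineq4)
  also have "\<dots> \<le> norm q ^ (a + j) + norm q ^ (a + j)"
  proof (rule add_mono)
    show "norm (q ^ NT_exp T a j) \<le> norm q ^ (a + j)"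
      using NT_exp_ge[OF T_pos, of a j] by (rule norm_q_power_le)
    show "norm (q ^ (NT_exp T a j + a + 1)) \<le> norm q ^ (a + j)"
      using NT_exp_ge[OF T_pos, of a j] by (intro norm_q_power_le) linarith
  qed
  finally show ?thesis
    by (simp add: power_add)
qed

lemma summable_norm_NT_term: "summable (\<lambda>a. norm (NT_term a j))"
proof (rule summable_comparison_test')
  show "summable (\<lambda>a. 2 * norm q ^ j * norm q ^ a)"
    using norm_q_less_1 by (intro summable_mult summable_geometric) auto
  show "norm (norm (NT_term a j)) \<le> 2 * norm q ^ j * norm q ^ a" for a
    using norm_NT_term_le[of a j] by (simp add: mult_ac)
qed

lemma NT_term_sums: "(\<lambda>a. NT_term a j) sums NT_sum j"
  unfolding NT_sum_def by (rule summable_sums[OF summable_norm_cancel[OF summable_norm_NT_term]])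

lemma norm_NT_sum_le: "norm (NT_sum j) \<le> 2 * norm q ^ j / (1 - norm q)"
proof -
  have "norm (NT_sum j) \<le> (\<Sum>a. norm (NT_term a j))"
    unfolding NT_sum_def by (rule summable_norm[OF summable_norm_NT_term])
  also have "\<dots> \<le> (\<Sum>a. 2 * norm q ^ j * norm q ^ a)"
    using norm_q_less_1 norm_NT_term_le
    by (intro suminf_le summable_norm_NT_term summable_mult summable_geometric) (auto simp: mult_ac)
  also have "\<dots> = 2 * norm q ^ j / (1 - norm q)"
    using norm_q_less_1 by (simp add: suminf_mult suminf_geometric)
  finally show ?thesis .
qed

definition moment_term :: "nat \<Rightarrow> nat \<times> nat \<times> bool \<Rightarrow> complex" where
  "moment_term r i = of_real (moment_weight r i) * q ^ moment_exp T i"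

lemma norm_moment_term_le:
  "norm (moment_term r (j, a, b)) \<le> (2 * (real j + 1) ^ r * norm q ^ (j + 1)) * norm q ^ a"
proof -
  have "\<bar>moment_weight r (j, a, b)\<bar> = \<bar>sym_power r (j + 1)\<bar>"
    by (simp add: moment_weight_def abs_mult)
  then have "norm (moment_term r (j, a, b)) = \<bar>sym_power r (j + 1)\<bar> * norm (q ^ moment_exp T (j, a, b))"
    by (simp add: moment_term_def norm_mult)
  also have "\<dots> \<le> (2 * (real j + 1) ^ r) * norm q ^ (a + (j + 1))"
    using abs_sym_power_le[of r "j + 1"] moment_exp_ge[OF T_pos, of a j b]
    by (intro mult_mono norm_q_power_le) (auto simp: add.commute)
  finally show ?thesis
    by (simp add: power_add mult_ac)
qed

lemma moment_term_summable: "moment_term r summable_on A"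
proof -
  define f where "f j = 2 * (real j + 1) ^ r * norm q ^ (j + 1)" for j
  define g :: "nat \<times> bool \<Rightarrow> real" where "g = (\<lambda>ab. norm q ^ fst ab)"
  have "f summable_on UNIV"
  proof (subst summable_on_UNIV_nonneg_real_iff)
    have "summable (\<lambda>j. (2 * norm q) * ((real j + 1) ^ r * norm q ^ j))"
      using norm_q_less_1 by (intro summable_mult summable_power_times_geometric) auto
    also have "(\<lambda>j. (2 * norm q) * ((real j + 1) ^ r * norm q ^ j)) = f"
      by (simp add: f_def fun_eq_iff mult_ac)
    finally show "summable f" .
  qed (simp add: f_def)
  moreover have "g summable_on UNIV \<times> UNIV"
    using summable_on_product_nonneg[of "\<lambda>a. norm q ^ a" UNIV "\<lambda>_::bool. 1" UNIV] norm_q_less_1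
    by (simp add: g_def case_prod_unfold summable_on_UNIV_nonneg_real_iff summable_geometric)
  ultimately have "(\<lambda>(j, ab). f j * g ab) summable_on UNIV \<times> (UNIV \<times> UNIV)"
    by (rule summable_on_product_nonneg) (auto simp: f_def g_def)
  then have bound_summable: "(\<lambda>(j, ab). f j * g ab) summable_on UNIV"
    by simp
  have bound: "norm (moment_term r i) \<le> (case i of (j, ab) \<Rightarrow> f j * g ab)" for i
  proof -
    obtain j a b where "i = (j, a, b)"
      by (cases i)
    then show ?thesis
      using norm_moment_term_le[of r j a b] by (simp add: f_def g_def)
  qed
  have "(\<lambda>i. norm (moment_term r i)) summable_on UNIV"
    using bound_summable by (rule Infinite_Sum.abs_summable_on_comparison_test') (rule bound)
  then show ?thesis
    by (rule summable_on_subset_banach[OF abs_summable_summable]) simp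
qed

lemma has_sum_moment_series:
  assumes "r > 0"
  shows "((\<lambda>k. of_real (moment_series T r $ k) * q ^ k) has_sum (\<Sum>\<^sub>\<infinity>i. moment_term r i)) UNIV"
proof -
  have bij: "bij_betw (\<lambda>i. (moment_exp T i, i)) UNIV (SIGMA k:UNIV. {i. moment_exp T i = k})"
    by (rule bij_betwI[where g = snd]) auto
  have "((\<lambda>(k, i). moment_term r i) has_sum (\<Sum>\<^sub>\<infinity>i. moment_term r i)) (SIGMA k:UNIV. {i. moment_exp T i = k})"
    using has_sum_reindex_bij_betw[OF bij, of "\<lambda>(k, i). moment_term r i"]
      has_sum_infsum[OF moment_term_summable[of r UNIV]] by simp
  then have "((\<lambda>k. \<Sum>i | moment_exp T i = k. moment_term r i) has_sum (\<Sum>\<^sub>\<infinity>i. moment_term r i)) UNIV"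
    by (rule has_sum_Sigma') (auto intro: has_sum_finiteI finite_moment_exp_fiber[OF T_pos])
  moreover have "(\<Sum>i | moment_exp T i = k. moment_term r i) = of_real (moment_series T r $ k) * q ^ k" for k
    by (simp add: moment_term_def moment_series_nth_fiber[OF assms T_pos] sum_distrib_right)
  ultimately show ?thesis
    by simp
qed

lemma has_sum_sym_power_NT_sum:
  "((\<lambda>j. of_real (sym_power r (j + 1)) * NT_sum (j + 1)) has_sum (\<Sum>\<^sub>\<infinity>i. moment_term r i)) UNIV"
proof -
  have inner: "((\<lambda>ab. moment_term r (j, ab)) has_sum of_real (sym_power r (j + 1)) * NT_sum (j + 1)) UNIV" for j
  proof -
    have sm: "(\<lambda>ab. moment_term r (j, ab)) summable_on UNIV"
      using summable_on_SigmaD1[of "\<lambda>j ab. moment_term r (j, ab)" UNIV "\<lambda>_. UNIV"]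
        moment_term_summable[of r UNIV] by simp
    then have "((\<lambda>a. \<Sum>b\<in>UNIV. moment_term r (j, a, b)) has_sum (\<Sum>\<^sub>\<infinity>ab. moment_term r (j, ab))) UNIV"
      by (intro has_sum_Sigma'[where f = "\<lambda>ab. moment_term r (j, ab)"])
        (auto intro: has_sum_finiteI simp: has_sum_infsum)
    moreover have "(\<Sum>b\<in>UNIV. moment_term r (j, a, b)) = of_real (sym_power r (j + 1)) * NT_term a (j + 1)" for a
      by (simp add: UNIV_bool moment_term_def moment_weight_def moment_exp_def NT_term_def algebra_simps)
    moreover have "((\<lambda>a. of_real (sym_power r (j + 1)) * NT_term a (j + 1))
        has_sum of_real (sym_power r (j + 1)) * NT_sum (j + 1)) UNIV"
      by (intro has_sum_cmult_right norm_summable_imp_has_sum summable_norm_NT_term NT_term_sums)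
    ultimately show ?thesis
      using has_sum_infsum[OF sm] has_sum_unique by fastforce
  qed
  have "(moment_term r has_sum (\<Sum>\<^sub>\<infinity>i. moment_term r i)) (UNIV \<times> UNIV)"
    using has_sum_infsum[OF moment_term_summable[of r UNIV]] by simp
  then show ?thesis
    by (rule has_sum_Sigma'[where f = "moment_term r"]) (use inner in auto)
qed

lemma M_T_eq:
  assumes "r > 0"
  shows "M_T T r q = inverse (qpoch_inf q) * (\<Sum>\<^sub>\<infinity>i. moment_term r i)"
proof -
  let ?G = "of_real_fps (moment_series T r) :: complex fps"
  define F where "F z = inverse (qpoch_inf z) * eval_fps ?G z" for z
  have rad: "1 \<le> fps_conv_radius ?G"
    by (rule fps_conv_radius_moment_series[OF assms])
  have "0 < fps_conv_radius ?G"
    using rad by (rule order.strict_trans2[rotated]) simp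
  then have "F has_fps_expansion of_real_fps (inverse qpoch_fps) * ?G"
    unfolding F_def by (intro has_fps_expansion_mult has_fps_expansion_inverse_qpoch_inf eval_fps_has_fps_expansion)
  moreover have "ball 0 1 \<subseteq> eball (0::complex) (fps_conv_radius ?G)"
  proof
    fix z :: complex
    assume "z \<in> ball 0 1"
    then have "ereal (norm z) < 1"
      by simp
    also note rad
    finally show "z \<in> eball 0 (fps_conv_radius ?G)"
      by simp
  qed
  then have "F holomorphic_on eball 0 (ereal 1)"
    unfolding F_def eball_ereal
    by (intro holomorphic_intros holomorphic_on_subset[OF holomorphic_inverse_qpoch_inf]) auto
  ultimately have "(\<lambda>n. (of_real_fps (inverse qpoch_fps) * ?G) $ n * q ^ n) sums F q"
    by (rule has_fps_expansion_imp_sums_complex) (use norm_q_less_1 in simp)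
  then have "M_T T r q = F q"
    by (simp add: M_T_def sums_iff m_T_eq_nth flip: of_real_fps_mult)
  moreover have "eval_fps ?G q = (\<Sum>\<^sub>\<infinity>i. moment_term r i)"
    using has_sum_imp_sums[OF has_sum_moment_series[OF assms]] by (simp add: eval_fps_def sums_iff)
  ultimately show ?thesis
    by (simp add: F_def)
qed

end

section \<open>Partial fractions\<close>

lemma NT_exp_eq: "NT_exp T a j = NT_exp T a 0 + j * (a + 1)"
  by (simp add: NT_exp_def)

lemma int_NT_exp_0:
  assumes "T > 0"
  shows "int (NT_exp T a 0) = (int a + 1) * (int T * (int a + 1) - 1) div 2"
proof -
  obtain t where T: "T = Suc t"
    using assms by (cases T) auto
  have "int (NT_exp T a 0) = int ((a + 1) * (T * (a + 1) - 1)) div 2"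
    by (simp add: NT_exp_def zdiv_int)
  also have "int ((a + 1) * (T * (a + 1) - 1)) = (int a + 1) * (int T * (int a + 1) - 1)"
    unfolding T by (simp add: algebra_simps)
  finally show ?thesis .
qed

lemma theta_exp_pos:
  assumes "T > 0"
  shows "nat ((int a + 1) * (int T * (int a + 1) + 1) div 2) = NT_exp T a 0 + a + 1"
proof -
  have "(int a + 1) * (int T * (int a + 1) + 1) = (int a + 1) * (int T * (int a + 1) - 1) + (int a + 1) * 2"
    by (simp add: algebra_simps)
  then have "(int a + 1) * (int T * (int a + 1) + 1) div 2 = int (NT_exp T a 0) + (int a + 1)"
    by (simp add: int_NT_exp_0[OF assms])
  then show ?thesis
    by simp
qed

lemma theta_exp_neg:
  assumes "T > 0"
  shows "nat ((- int a - 1) * (int T * (- int a - 1) + 1) div 2) = NT_exp T a 0"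
proof -
  have "(- int a - 1) * (int T * (- int a - 1) + 1) div 2 = int (NT_exp T a 0)"
    unfolding int_NT_exp_0[OF assms] by (simp add: algebra_simps)
  then show ?thesis
    by simp
qed

locale NT_point_nz = NT_point +
  assumes q_nonzero: "q \<noteq> 0"
begin

definition theta_term :: "complex \<Rightarrow> int \<Rightarrow> complex" where
  "theta_term \<zeta> n = (-1) ^ nat \<bar>n\<bar> * q ^ nat (n * (int T * n + 1) div 2) / (1 - \<zeta> * q powi n)"

definition theta_coeff :: "nat \<Rightarrow> complex" where
  "theta_coeff a = (-1) ^ (a + 1) * q ^ (NT_exp T a 0 + a + 1)"

definition theta_const :: complex where
  "theta_const = 1 + 2 * suminf theta_coeff"

lemma theta_term_0: "theta_term \<zeta> 0 = 1 / (1 - \<zeta>)"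
  by (simp add: theta_term_def)

lemma theta_term_pos: "theta_term \<zeta> (int a + 1) = theta_coeff a / (1 - \<zeta> * q ^ (a + 1))"
proof -
  have "q powi (int a + 1) = q ^ (a + 1)"
    using q_nonzero by (simp add: power_int_add)
  moreover have "nat \<bar>int a + 1\<bar> = a + 1"
    by simp
  ultimately show ?thesis
    by (simp add: theta_term_def theta_coeff_def theta_exp_pos[OF T_pos])
qed

lemma theta_term_neg: "theta_term \<zeta> (- int a - 1) = theta_coeff a / (q ^ (a + 1) - \<zeta>)"
proof -
  let ?x = "q ^ (a + 1)"
  have "- int a - 1 = - int (a + 1)"
    by simp
  then have "q powi (- int a - 1) = inverse ?x"
    by (simp only: power_int_minus power_int_of_nat)
  moreover have "nat \<bar>- int a - 1\<bar> = a + 1"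
    by simp
  ultimately have "theta_term \<zeta> (- int a - 1) = (-1) ^ (a + 1) * q ^ NT_exp T a 0 / (1 - \<zeta> * inverse ?x)"
    by (simp add: theta_term_def theta_exp_neg[OF T_pos])
  also have "1 - \<zeta> * inverse ?x = (?x - \<zeta>) / ?x"
    using q_nonzero by (simp add: field_simps)
  also have "(-1) ^ (a + 1) * q ^ NT_exp T a 0 / ((?x - \<zeta>) / ?x) = theta_coeff a / (?x - \<zeta>)"
    by (simp add: theta_coeff_def power_add mult_ac)
  finally show ?thesis .
qed

lemma norm_theta_coeff_le: "norm (theta_coeff a) \<le> norm q ^ a"
proof -
  have "norm (theta_coeff a) = norm (q ^ (NT_exp T a 0 + a + 1))"
    by (simp add: theta_coeff_def norm_mult norm_power)
  also have "\<dots> \<le> norm q ^ a"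
    by (rule norm_q_power_le) simp
  finally show ?thesis .
qed

lemma summable_norm_theta_coeff: "summable (\<lambda>a. norm (theta_coeff a))"
proof (rule summable_comparison_test')
  show "summable (\<lambda>a. norm q ^ a)"
    using norm_q_less_1 by (simp add: summable_geometric)
  show "norm (norm (theta_coeff a)) \<le> norm q ^ a" for a
    using norm_theta_coeff_le by simp
qed

lemma theta_coeff_mult_power_diff:
  "theta_coeff a * (w ^ (b + 1) * ((q ^ (a + 1)) ^ (b + 1) - (q ^ (a + 1)) ^ b))
     = w ^ (b + 1) * NT_term a (b + 1)"
proof -
  define x where "x = q ^ (a + 1)"
  have "q ^ ((b + 1) * (a + 1)) = x ^ (b + 1)"
    unfolding x_def by (subst mult.commute) (rule power_mult)
  then have e1: "q ^ NT_exp T a (b + 1) = q ^ NT_exp T a 0 * x ^ (b + 1)"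
    by (subst NT_exp_eq) (simp only: power_add)
  have e2: "q ^ (NT_exp T a (b + 1) + a + 1) = q ^ NT_exp T a 0 * x ^ (b + 1) * x"
    by (simp only: add.assoc power_add e1 x_def)
  have c: "theta_coeff a = (-1) ^ (a + 1) * q ^ NT_exp T a 0 * x"
    by (simp only: theta_coeff_def x_def add.assoc power_add mult.assoc)
  show ?thesis
    unfolding NT_term_def e1 e2 c x_def[symmetric] by (simp add: algebra_simps)
qed

lemma norm_q_power_Suc_le: "norm (q ^ (a + 1)) \<le> norm q"
  using norm_q_power_le[of 1 "a + 1"] by simp

definition theta_double_term :: "complex \<Rightarrow> nat \<Rightarrow> nat \<Rightarrow> complex" where
  "theta_double_term \<zeta> a b = (\<zeta> ^ (b + 1) + inverse \<zeta> ^ (b + 1)) * NT_term a (b + 1)"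

context
  fixes \<zeta> :: complex and R :: real
  assumes R_pos: "R > 0" and R_norm_q: "R * norm q < 1"
    and zeta_ge: "1 / R \<le> norm \<zeta>" and zeta_le: "norm \<zeta> \<le> R" and zeta_neq_1: "\<zeta> \<noteq> 1"
begin

lemma zeta_nonzero: "\<zeta> \<noteq> 0"
  using zeta_ge R_pos by auto

lemma norm_inverse_zeta_le: "norm (inverse \<zeta>) \<le> R"
proof -
  have "1 / norm \<zeta> \<le> R"
    using zeta_ge zeta_nonzero R_pos by (simp add: field_simps)
  then show ?thesis
    by (simp add: norm_inverse divide_inverse)
qed

lemma norm_zeta_mult_q_power_le: "norm (\<zeta> * q ^ (a + 1)) \<le> R * norm q"
  unfolding norm_mult using R_pos by (intro mult_mono zeta_le norm_q_power_Suc_le) auto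

lemma norm_inverse_zeta_mult_q_power_le: "norm (inverse \<zeta> * q ^ (a + 1)) \<le> R * norm q"
  unfolding norm_mult using R_pos by (intro mult_mono norm_inverse_zeta_le norm_q_power_Suc_le) auto

lemma NT_term_sums_zeta:
  "(\<lambda>b. \<zeta> ^ (b + 1) * NT_term a (b + 1)) sums ((1 - \<zeta>) * theta_term \<zeta> (int a + 1) - theta_coeff a)"
proof -
  let ?x = "q ^ (a + 1)"
  have lt: "norm (\<zeta> * ?x) < 1"
    using norm_zeta_mult_q_power_le[of a] R_norm_q by linarith
  then have "1 - \<zeta> * ?x \<noteq> 0"
    by auto
  then have "theta_coeff a * ((1 - \<zeta>) / (1 - \<zeta> * ?x) - 1) = (1 - \<zeta>) * theta_term \<zeta> (int a + 1) - theta_coeff a"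
    unfolding theta_term_pos by (simp add: field_simps)
  then show ?thesis
    using sums_mult[OF sums_power_times_power_diff[OF lt], of "theta_coeff a"]
    unfolding theta_coeff_mult_power_diff by simp
qed

lemma NT_term_sums_inverse_zeta:
  "(\<lambda>b. inverse \<zeta> ^ (b + 1) * NT_term a (b + 1)) sums ((1 - \<zeta>) * theta_term \<zeta> (- int a - 1) - theta_coeff a)"
proof -
  let ?x = "q ^ (a + 1)"
  have lt: "norm (inverse \<zeta> * ?x) < 1"
    using norm_inverse_zeta_mult_q_power_le[of a] R_norm_q by linarith
  have "norm ?x \<le> norm q"
    by (rule norm_q_power_Suc_le)
  also have "norm q < 1 / R"
    using R_pos R_norm_q by (simp add: field_simps)
  also note zeta_ge
  finally have "?x \<noteq> \<zeta>"
    by auto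
  then have "theta_coeff a * ((1 - inverse \<zeta>) / (1 - inverse \<zeta> * ?x) - 1)
      = (1 - \<zeta>) * theta_term \<zeta> (- int a - 1) - theta_coeff a"
    using zeta_nonzero unfolding theta_term_neg by (simp add: field_simps)
  then show ?thesis
    using sums_mult[OF sums_power_times_power_diff[OF lt], of "theta_coeff a"]
    unfolding theta_coeff_mult_power_diff by simp
qed

lemma norm_theta_term_pos_le: "norm (theta_term \<zeta> (int a + 1)) \<le> norm q ^ a / (1 - R * norm q)"
proof -
  have "1 - R * norm q \<le> norm (1::complex) - norm (\<zeta> * q ^ (a + 1))"
    using norm_zeta_mult_q_power_le[of a] by simp
  also have "\<dots> \<le> norm (1 - \<zeta> * q ^ (a + 1))"
    by (rule norm_triangle_ineq2)
  finally have "1 - R * norm q \<le> norm (1 - \<zeta> * q ^ (a + 1))" .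
  then show ?thesis
    unfolding theta_term_pos norm_divide
    using norm_theta_coeff_le R_norm_q by (intro frac_le) auto
qed

lemma norm_theta_term_neg_le: "norm (theta_term \<zeta> (- int a - 1)) \<le> norm q ^ a / (1 / R - norm q)"
proof -
  have "1 / R - norm q \<le> norm \<zeta> - norm (q ^ (a + 1))"
    using norm_q_power_Suc_le[of a] zeta_ge by linarith
  also have "\<dots> \<le> norm (q ^ (a + 1) - \<zeta>)"
    using norm_triangle_ineq2[of \<zeta> "q ^ (a + 1)"] by (simp add: norm_minus_commute)
  finally have "1 / R - norm q \<le> norm (q ^ (a + 1) - \<zeta>)" .
  moreover have "1 / R - norm q > 0"
    using R_pos R_norm_q by (simp add: field_simps)
  ultimately show ?thesis
    unfolding theta_term_neg norm_divide
    using norm_theta_coeff_le by (intro frac_le) auto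
qed

lemma summable_norm_theta_term_pos: "summable (\<lambda>a. norm (theta_term \<zeta> (int a + 1)))"
proof (rule summable_comparison_test')
  show "summable (\<lambda>a. norm q ^ a / (1 - R * norm q))"
    using norm_q_less_1 by (intro summable_divide summable_geometric) auto
qed (use norm_theta_term_pos_le in simp)

lemma summable_norm_theta_term_neg: "summable (\<lambda>a. norm (theta_term \<zeta> (- int a - 1)))"
proof (rule summable_comparison_test')
  show "summable (\<lambda>a. norm q ^ a / (1 / R - norm q))"
    using norm_q_less_1 by (intro summable_divide summable_geometric) auto
qed (use norm_theta_term_neg_le in simp)

lemma norm_theta_double_term_le:
  "norm (theta_double_term \<zeta> a b) \<le> norm q ^ a * (4 * (R * norm q) ^ (b + 1))"
proof -
  have "norm (\<zeta> ^ (b + 1) + inverse \<zeta> ^ (b + 1)) \<le> norm \<zeta> ^ (b + 1) + norm (inverse \<zeta>) ^ (b + 1)"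
    by (rule order_trans[OF norm_triangle_ineq]) (simp add: norm_power norm_mult)
  also have "\<dots> \<le> R ^ (b + 1) + R ^ (b + 1)"
    by (intro add_mono power_mono zeta_le norm_inverse_zeta_le) auto
  finally have "norm (\<zeta> ^ (b + 1) + inverse \<zeta> ^ (b + 1)) \<le> 2 * R ^ (b + 1)"
    by simp
  then have "norm (theta_double_term \<zeta> a b) \<le> (2 * R ^ (b + 1)) * (2 * norm q ^ a * norm q ^ (b + 1))"
    unfolding theta_double_term_def norm_mult using R_pos
    by (intro mult_mono norm_NT_term_le) auto
  then show ?thesis
    by (simp add: power_mult_distrib mult_ac)
qed

lemma summable_norm_theta_double_term:
  "summable (\<lambda>b. norm (theta_double_term \<zeta> a b))"
proof (rule summable_comparison_test')
  have "summable (\<lambda>b. (norm q ^ a * 4 * (R * norm q)) * (R * norm q) ^ b)"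
    using R_pos R_norm_q by (intro summable_mult summable_geometric) auto
  then show "summable (\<lambda>b. norm q ^ a * (4 * (R * norm q) ^ (b + 1)))"
    by (simp add: mult_ac)
qed (use norm_theta_double_term_le in simp)

lemma theta_double_term_summable: "(\<lambda>(a, b). theta_double_term \<zeta> a b) summable_on UNIV"
proof -
  have "(\<lambda>a. norm q ^ a) summable_on UNIV"
    using norm_q_less_1 by (simp add: summable_on_UNIV_nonneg_real_iff summable_geometric)
  moreover have "(\<lambda>b. 4 * (R * norm q) ^ (b + 1)) summable_on UNIV"
  proof (subst summable_on_UNIV_nonneg_real_iff)
    have "summable (\<lambda>b. (4 * (R * norm q)) * (R * norm q) ^ b)"
      using R_pos R_norm_q by (intro summable_mult summable_geometric) auto
    then show "summable (\<lambda>b. 4 * (R * norm q) ^ (b + 1))"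
      by (simp add: mult_ac)
  qed (use R_pos in auto)
  ultimately have "(\<lambda>(a, b). norm q ^ a * (4 * (R * norm q) ^ (b + 1))) summable_on UNIV \<times> UNIV"
    by (rule summable_on_product_nonneg) (use R_pos in auto)
  then have "(\<lambda>(a, b). norm q ^ a * (4 * (R * norm q) ^ (b + 1))) summable_on UNIV"
    by simp
  moreover have "norm (case i of (a, b) \<Rightarrow> theta_double_term \<zeta> a b)
      \<le> (case i of (a, b) \<Rightarrow> norm q ^ a * (4 * (R * norm q) ^ (b + 1)))" for i
    by (cases i) (simp only: case_prod_conv norm_theta_double_term_le)
  ultimately have "(\<lambda>i. norm (case i of (a, b) \<Rightarrow> theta_double_term \<zeta> a b)) summable_on UNIV"
    by (rule Infinite_Sum.abs_summable_on_comparison_test')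
  then show ?thesis
    by (rule abs_summable_summable)
qed

lemma theta_double_term_has_sum_b:
  "((\<lambda>b. theta_double_term \<zeta> a b) has_sum
     ((1 - \<zeta>) * (theta_term \<zeta> (int a + 1) + theta_term \<zeta> (- int a - 1)) - 2 * theta_coeff a)) UNIV"
proof (rule norm_summable_imp_has_sum[OF summable_norm_theta_double_term])
  show "(\<lambda>b. theta_double_term \<zeta> a b) sums
      ((1 - \<zeta>) * (theta_term \<zeta> (int a + 1) + theta_term \<zeta> (- int a - 1)) - 2 * theta_coeff a)"
    using sums_add[OF NT_term_sums_zeta NT_term_sums_inverse_zeta, of a a]
    by (simp add: theta_double_term_def algebra_simps)
qed

lemma theta_double_term_has_sum_a:
  "((\<lambda>a. theta_double_term \<zeta> a b) has_sum ((\<zeta> ^ (b + 1) + inverse \<zeta> ^ (b + 1)) * NT_sum (b + 1))) UNIV"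
  unfolding theta_double_term_def
  by (intro has_sum_cmult_right norm_summable_imp_has_sum summable_norm_NT_term NT_term_sums)

lemma theta_partial_fractions:
  "(\<lambda>b. (\<zeta> ^ (b + 1) + inverse \<zeta> ^ (b + 1)) * NT_sum (b + 1))
     sums ((1 - \<zeta>) * (\<Sum>\<^sub>\<infinity>n. theta_term \<zeta> n) - theta_const)"
proof -
  define S where "S = (\<Sum>\<^sub>\<infinity>(a, b). theta_double_term \<zeta> a b)"
  have S: "((\<lambda>(a, b). theta_double_term \<zeta> a b) has_sum S) (UNIV \<times> UNIV)"
    unfolding S_def using has_sum_infsum[OF theta_double_term_summable] by simp
  then have "((\<lambda>(b, a). theta_double_term \<zeta> a b) has_sum S) (UNIV \<times> UNIV)"
    by (subst (asm) has_sum_swap) (simp add: case_prod_unfold)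
  then have by_b: "((\<lambda>b. (\<zeta> ^ (b + 1) + inverse \<zeta> ^ (b + 1)) * NT_sum (b + 1)) has_sum S) UNIV"
    by (rule has_sum_Sigma') (simp only: case_prod_conv, rule theta_double_term_has_sum_a)
  have by_a: "((\<lambda>a. (1 - \<zeta>) * (theta_term \<zeta> (int a + 1) + theta_term \<zeta> (- int a - 1)) - 2 * theta_coeff a)
      has_sum S) UNIV"
    using S by (rule has_sum_Sigma') (simp only: case_prod_conv, rule theta_double_term_has_sum_b)
  define A where "A = (\<Sum>a. theta_term \<zeta> (int a + 1))"
  define B where "B = (\<Sum>a. theta_term \<zeta> (- int a - 1))"
  have hA: "((\<lambda>a. theta_term \<zeta> (int a + 1)) has_sum A) UNIV"
    unfolding A_def by (rule norm_summable_imp_has_sum_suminf[OF summable_norm_theta_term_pos])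
  have hB: "((\<lambda>a. theta_term \<zeta> (- int a - 1)) has_sum B) UNIV"
    unfolding B_def by (rule norm_summable_imp_has_sum_suminf[OF summable_norm_theta_term_neg])
  have hC: "(theta_coeff has_sum suminf theta_coeff) UNIV"
    by (rule norm_summable_imp_has_sum_suminf[OF summable_norm_theta_coeff])
  have "((\<lambda>a. (1 - \<zeta>) * (theta_term \<zeta> (int a + 1) + theta_term \<zeta> (- int a - 1)) - 2 * theta_coeff a)
      has_sum ((1 - \<zeta>) * (A + B) - 2 * suminf theta_coeff)) UNIV"
    by (intro has_sum_diff has_sum_cmult_right has_sum_add hA hB hC)
  with by_a have "S = (1 - \<zeta>) * (A + B) - 2 * suminf theta_coeff"
    by (rule has_sum_unique)
  also have "\<dots> = (1 - \<zeta>) * (\<Sum>\<^sub>\<infinity>n. theta_term \<zeta> n) - theta_const"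
    using infsumI[OF has_sum_int_split[OF hA hB]] zeta_neq_1
    by (simp add: theta_term_0 theta_const_def field_simps)
  finally show ?thesis
    using has_sum_imp_sums[OF by_b] by simp
qed

end

end

section \<open>Term-wise differentiation of cosine series\<close>

text \<open>\<open>cos_term K d j\<close> is the \<open>d\<close>-th derivative of \<open>u \<mapsto> K j (e^(2\<pi>iju) + e^(-2\<pi>iju))\<close>.\<close>

definition cos_term :: "(nat \<Rightarrow> complex) \<Rightarrow> nat \<Rightarrow> nat \<Rightarrow> complex \<Rightarrow> complex" where
  "cos_term K d j u = K j * (2 * of_real pi * \<i> * of_nat j) ^ d *
     (exp (2 * of_real pi * \<i> * of_nat j * u) + (-1) ^ d * exp (- (2 * of_real pi * \<i> * of_nat j * u)))"

definition cos_series :: "(nat \<Rightarrow> complex) \<Rightarrow> nat \<Rightarrow> complex \<Rightarrow> complex" where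
  "cos_series K d u = (\<Sum>j. cos_term K d j u)"

lemma has_field_derivative_cos_term:
  "(cos_term K d j has_field_derivative cos_term K (Suc d) j u) (at u)"
  unfolding cos_term_def[abs_def] by (auto intro!: derivative_eq_intros simp: algebra_simps)

lemma cos_term_0:
  "cos_term K 0 j u = K j * (exp (2 * of_real pi * \<i> * u) ^ j + inverse (exp (2 * of_real pi * \<i> * u)) ^ j)"
proof -
  have "2 * of_real pi * \<i> * of_nat j * u = of_nat j * (2 * of_real pi * \<i> * u)"
    by (simp add: mult_ac)
  then have "exp (2 * of_real pi * \<i> * of_nat j * u) = exp (2 * of_real pi * \<i> * u) ^ j"
    by (simp only: exp_of_nat_mult)
  then show ?thesis
    unfolding cos_term_def by (simp only: exp_minus power_inverse power_0 mult_1 mult_1_right)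
qed

lemma cos_term_at_0: "cos_term K d j 0 = (2 * of_real pi * \<i>) ^ d * of_real (sym_power d j) * K j"
proof -
  let ?c = "2 * of_real pi * \<i> :: complex"
  have sym: "of_nat j ^ d * (1 + (-1) ^ d) = (of_real (sym_power d j) :: complex)"
    using power_minus[of "real j" d] by (simp add: sym_power_def distrib_left mult.commute)
  have "cos_term K d j 0 = K j * (?c * of_nat j) ^ d * (1 + (-1) ^ d)"
    by (simp add: cos_term_def)
  also have "\<dots> = ?c ^ d * (of_nat j ^ d * (1 + (-1) ^ d)) * K j"
    unfolding power_mult_distrib[of ?c] by (simp only: mult_ac)
  finally show ?thesis
    unfolding sym .
qed

lemma norm_exp_2pi_i_le:
  fixes u :: complex
  assumes "norm u < \<epsilon>" "norm s = 1"
  shows "norm (exp (s * (2 * of_real pi * \<i> * of_nat j * u))) \<le> exp (2 * pi * \<epsilon>) ^ j"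
proof -
  have "norm (exp (s * (2 * of_real pi * \<i> * of_nat j * u))) \<le> exp (2 * pi * real j * norm u)"
    using norm_exp[of "s * (2 * of_real pi * \<i> * of_nat j * u)"] assms(2) by (simp add: norm_mult)
  also have "\<dots> \<le> exp (real j * (2 * pi * \<epsilon>))"
    using assms(1) by (simp add: mult_left_mono)
  also have "\<dots> = exp (2 * pi * \<epsilon>) ^ j"
    by (rule exp_of_nat_mult)
  finally show ?thesis .
qed

lemma norm_cos_term_le:
  assumes "norm u < \<epsilon>" "norm (K j) \<le> C * \<sigma> ^ j" "\<sigma> \<ge> 0"
  shows "norm (cos_term K d j u)
    \<le> 2 * \<bar>C\<bar> * (2 * pi) ^ d * ((real j + 1) ^ d * (exp (2 * pi * \<epsilon>) * \<sigma>) ^ j)"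
proof -
  let ?E = "exp (2 * pi * \<epsilon>)"
  let ?z = "2 * of_real pi * \<i> * of_nat j * u"
  have "norm (exp ?z + (-1) ^ d * exp (- ?z)) \<le> norm (exp ?z) + norm (exp (- 1 * ?z))"
    using norm_triangle_ineq[of "exp ?z" "(-1) ^ d * exp (- ?z)"] by (simp add: norm_mult norm_power)
  also have "\<dots> \<le> ?E ^ j + ?E ^ j"
    using norm_exp_2pi_i_le[OF assms(1), of 1 j] norm_exp_2pi_i_le[OF assms(1), of "-1" j]
    by (intro add_mono) simp_all
  finally have exps: "norm (exp ?z + (-1) ^ d * exp (- ?z)) \<le> 2 * ?E ^ j"
    by simp
  have "norm ((2 * of_real pi * \<i> * of_nat j :: complex) ^ d) = (2 * pi * real j) ^ d"
    by (simp add: norm_power norm_mult)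
  also have "\<dots> \<le> (2 * pi * (real j + 1)) ^ d"
    by (intro power_mono mult_left_mono) auto
  also have "\<dots> = (2 * pi) ^ d * (real j + 1) ^ d"
    by (rule power_mult_distrib)
  finally have powers: "norm ((2 * of_real pi * \<i> * of_nat j :: complex) ^ d) \<le> (2 * pi) ^ d * (real j + 1) ^ d" .
  have "C * \<sigma> ^ j \<le> \<bar>C\<bar> * \<sigma> ^ j"
    using assms(3) by (intro mult_right_mono) auto
  with assms(2) have coeff: "norm (K j) \<le> \<bar>C\<bar> * \<sigma> ^ j"
    by linarith
  have "norm (cos_term K d j u) \<le> (\<bar>C\<bar> * \<sigma> ^ j) * ((2 * pi) ^ d * (real j + 1) ^ d) * (2 * ?E ^ j)"
    unfolding cos_term_def norm_mult using assms(3) by (intro mult_mono coeff powers exps) auto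
  then show ?thesis
    by (simp add: power_mult_distrib mult_ac)
qed

context
  fixes K :: "nat \<Rightarrow> complex" and C \<sigma> \<epsilon> :: real
  assumes K_le: "\<And>j. j \<ge> 1 \<Longrightarrow> norm (K j) \<le> C * \<sigma> ^ j"
    and \<sigma>_nonneg: "\<sigma> \<ge> 0" and exp_\<sigma>: "exp (2 * pi * \<epsilon>) * \<sigma> < 1"
begin

lemma cos_series_has_field_derivative:
  assumes u: "u \<in> ball 0 \<epsilon>"
  shows "(cos_series K d has_field_derivative cos_series K (Suc d) u) (at u)"
proof -
  define h where "h j = 2 * \<bar>C\<bar> * (2 * pi) ^ d * ((real j + 1) ^ d * (exp (2 * pi * \<epsilon>) * \<sigma>) ^ j)" for j
  have h: "summable h"
    unfolding h_def using \<sigma>_nonneg exp_\<sigma> by (intro summable_mult summable_power_times_geometric) auto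
  have bound: "\<forall>\<^sub>F j in sequentially. \<forall>x\<in>ball 0 \<epsilon>. norm (cos_term K d j x) \<le> h j"
    using eventually_ge_at_top[of 1]
  proof eventually_elim
    case (elim j)
    show ?case
      unfolding h_def by (intro ballI norm_cos_term_le K_le[OF elim] \<sigma>_nonneg) simp
  qed
  obtain g g' where g: "\<forall>x\<in>ball 0 \<epsilon>. (\<lambda>j. cos_term K d j x) sums g x \<and>
      (\<lambda>j. cos_term K (Suc d) j x) sums g' x \<and> (g has_field_derivative g' x) (at x)"
    using series_and_derivative_comparison[OF open_ball h has_field_derivative_cos_term bound] by blast
  then have "(g has_field_derivative cos_series K (Suc d) u) (at u)"
    using u by (simp add: cos_series_def sums_iff)
  moreover have "g x = cos_series K d x" if "x \<in> ball 0 \<epsilon>" for x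
    using g that by (simp add: cos_series_def sums_iff)
  ultimately show ?thesis
    by (rule has_field_derivative_transform_within_open[OF _ open_ball u])
qed

lemma higher_deriv_cos_series:
  assumes "u \<in> ball 0 \<epsilon>"
  shows "(deriv ^^ d) (cos_series K 0) u = cos_series K d u"
  using assms
proof (induction d arbitrary: u)
  case (Suc d)
  have "eventually (\<lambda>x. x \<in> ball 0 \<epsilon>) (nhds u)"
    using Suc.prems by (intro eventually_nhds_in_open) auto
  then have "eventually (\<lambda>x. (deriv ^^ d) (cos_series K 0) x = cos_series K d x) (nhds u)"
    by eventually_elim (rule Suc.IH)
  then have "deriv ((deriv ^^ d) (cos_series K 0)) u = deriv (cos_series K d) u"
    by (rule deriv_cong_ev) simp
  also have "\<dots> = cos_series K (Suc d) u"
    using cos_series_has_field_derivative[OF Suc.prems] by (rule DERIV_imp_deriv)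
  finally show ?case
    by simp
qed simp

lemma holomorphic_cos_series: "cos_series K 0 holomorphic_on ball 0 \<epsilon>"
  unfolding holomorphic_on_open[OF open_ball] using cos_series_has_field_derivative by blast

end

lemma exists_annulus_radius:
  fixes s :: real
  assumes "0 < s" "s < 1"
  obtains R \<epsilon> where "R > 0" "R * s < 1" "\<epsilon> > 0" "\<epsilon> \<le> 1 / 2" "exp (2 * pi * \<epsilon>) \<le> R"
proof -
  define R where "R = (1 / s + 1) / 2"
  have R: "R > 1" "R * s < 1"
    using assms by (auto simp: R_def field_simps)
  define \<epsilon> where "\<epsilon> = min (1 / 2) (ln R / (2 * pi))"
  have "\<epsilon> > 0" "\<epsilon> \<le> 1 / 2"
    using R by (auto simp: \<epsilon>_def)
  moreover have "2 * pi * \<epsilon> \<le> ln R"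
    by (simp add: \<epsilon>_def min_def field_simps)
  then have "exp (2 * pi * \<epsilon>) \<le> R"
    using R by (metis exp_le_cancel_iff exp_ln order.strict_trans zero_less_one)
  ultimately show ?thesis
    using R by (intro that[of R \<epsilon>]) auto
qed

lemma exp_2pi_i_in_annulus:
  fixes u :: complex
  assumes u: "u \<in> ball 0 \<epsilon> - {0}" and \<epsilon>: "\<epsilon> \<le> 1 / 2" and R: "exp (2 * pi * \<epsilon>) \<le> R"
  shows "1 / R \<le> norm (exp (2 * of_real pi * \<i> * u))" "norm (exp (2 * of_real pi * \<i> * u)) \<le> R"
    and "exp (2 * of_real pi * \<i> * u) \<noteq> 1"
proof -
  have norm_exp: "norm (exp (2 * of_real pi * \<i> * u)) = exp (- (2 * pi * Im u))"
    by simp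
  have "\<bar>Im u\<bar> \<le> \<epsilon>"
    using abs_Im_le_cmod[of u] u by simp
  then have "\<bar>2 * pi * Im u\<bar> \<le> 2 * pi * \<epsilon>"
    by (simp add: abs_mult)
  then have "- (2 * pi * \<epsilon>) \<le> - (2 * pi * Im u)" "- (2 * pi * Im u) \<le> 2 * pi * \<epsilon>"
    by linarith+
  then have "exp (- (2 * pi * \<epsilon>)) \<le> norm (exp (2 * of_real pi * \<i> * u))"
    "norm (exp (2 * of_real pi * \<i> * u)) \<le> exp (2 * pi * \<epsilon>)"
    unfolding norm_exp by simp_all
  moreover have "R > 0"
    using R exp_gt_zero order.strict_trans2 by blast
  then have "1 / R \<le> exp (- (2 * pi * \<epsilon>))"
    using R by (simp add: exp_minus field_simps)
  ultimately show "1 / R \<le> norm (exp (2 * of_real pi * \<i> * u))" "norm (exp (2 * of_real pi * \<i> * u)) \<le> R"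
    using R by linarith+
  show "exp (2 * of_real pi * \<i> * u) \<noteq> 1"
  proof
    assume "exp (2 * of_real pi * \<i> * u) = 1"
    then obtain n :: int where "Im u = 0" "Re u = of_int n"
      unfolding exp_eq_1 by auto
    moreover have "\<bar>Re u\<bar> < 1 / 2"
      using abs_Re_le_cmod[of u] u \<epsilon> by simp
    ultimately have "u = 0"
      by (simp add: complex_eq_iff)
    with u show False
      by simp
  qed
qed

context NT_point_nz
begin

definition fourier_coeff :: "nat \<Rightarrow> complex" where
  "fourier_coeff j = (if j = 0 then theta_const / 2 else NT_sum j) / qpoch_inf q"

lemma norm_fourier_coeff_le:
  assumes "j \<ge> 1"
  shows "norm (fourier_coeff j) \<le> 2 / (1 - norm q) / norm (qpoch_inf q) * norm q ^ j"
  using assms divide_right_mono[OF norm_NT_sum_le[of j], of "norm (qpoch_inf q)"]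
  by (simp add: fourier_coeff_def norm_divide field_simps)

lemma scriptM_eq_cos_series:
  fixes u :: complex and R :: real
  defines "\<zeta> \<equiv> exp (2 * of_real pi * \<i> * u)"
  assumes "R > 0" "R * norm q < 1" "1 / R \<le> norm \<zeta>" "norm \<zeta> \<le> R" "\<zeta> \<noteq> 1"
  shows "scriptM T q u = cos_series fourier_coeff 0 u"
proof -
  let ?X = "\<Sum>\<^sub>\<infinity>n. theta_term \<zeta> n"
  have "(\<lambda>b. (\<zeta> ^ (b + 1) + inverse \<zeta> ^ (b + 1)) * NT_sum (b + 1) / qpoch_inf q)
      sums (((1 - \<zeta>) * ?X - theta_const) / qpoch_inf q)"
    using theta_partial_fractions[OF assms(2-6)] by (rule sums_divide)
  then have "(\<lambda>b. cos_term fourier_coeff 0 (Suc b) u) sums (((1 - \<zeta>) * ?X - theta_const) / qpoch_inf q)"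
    by (simp add: cos_term_0 fourier_coeff_def \<zeta>_def mult_ac)
  then have "(\<lambda>j. cos_term fourier_coeff 0 j u)
      sums (((1 - \<zeta>) * ?X - theta_const) / qpoch_inf q + cos_term fourier_coeff 0 0 u)"
    by (rule sums_Suc)
  moreover have "cos_term fourier_coeff 0 0 u = theta_const / qpoch_inf q"
    by (simp add: cos_term_def fourier_coeff_def)
  ultimately have "cos_series fourier_coeff 0 u = (1 - \<zeta>) * ?X / qpoch_inf q"
    by (simp add: cos_series_def sums_iff diff_divide_distrib)
  also have "\<dots> = scriptM T q u"
    by (simp add: scriptM_def qpoch_inf_def theta_term_def[abs_def] \<zeta>_def)
  finally show ?thesis ..
qed

lemma cos_series_fourier_coeff_at_0:
  assumes "r > 0"
  shows "cos_series fourier_coeff r 0 = (2 * of_real pi * \<i>) ^ r * M_T T r q"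
proof -
  let ?c = "(2 * of_real pi * \<i>) ^ r / qpoch_inf q"
  have "(\<lambda>b. ?c * (of_real (sym_power r (b + 1)) * NT_sum (b + 1))) sums (?c * (\<Sum>\<^sub>\<infinity>i. moment_term r i))"
    by (intro sums_mult has_sum_imp_sums has_sum_sym_power_NT_sum)
  then have "(\<lambda>b. cos_term fourier_coeff r (Suc b) 0) sums (?c * (\<Sum>\<^sub>\<infinity>i. moment_term r i))"
    by (simp add: cos_term_at_0 fourier_coeff_def mult_ac)
  then have "(\<lambda>j. cos_term fourier_coeff r j 0) sums (?c * (\<Sum>\<^sub>\<infinity>i. moment_term r i) + cos_term fourier_coeff r 0 0)"
    by (rule sums_Suc)
  moreover have "cos_term fourier_coeff r 0 0 = 0"
    using assms by (simp add: cos_term_at_0 sym_power_def)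
  ultimately show ?thesis
    by (simp add: cos_series_def sums_iff M_T_eq[OF assms] divide_inverse mult_ac)
qed

end

theorem mainTheorem2:
  fixes T r :: nat and q :: complex
  assumes "odd T" and "T > 0" and "norm q < 1" and "q \<noteq> 0" and "r > 0"
  shows "\<exists>e>0. \<exists>f. f holomorphic_on ball 0 e \<and>
           (\<forall>u\<in>ball 0 e - {0}. f u = scriptM T q u) \<and>
           (deriv ^^ r) f 0 = (2 * pi * \<i>) ^ r * M_T T r q"
proof -
  interpret NT_point_nz T q
    using assms(2-4) by unfold_locales
  obtain R \<epsilon> where R: "R > 0" "R * norm q < 1" and \<epsilon>: "\<epsilon> > 0" "\<epsilon> \<le> 1 / 2" "exp (2 * pi * \<epsilon>) \<le> R"
    using exists_annulus_radius[of "norm q"] assms(3,4) by auto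
  have exp_q: "exp (2 * pi * \<epsilon>) * norm q < 1"
    using mult_right_mono[OF \<epsilon>(3), of "norm q"] R(2) by simp
  show ?thesis
  proof (intro exI conjI ballI)
    show "cos_series fourier_coeff 0 holomorphic_on ball 0 \<epsilon>"
      by (rule holomorphic_cos_series[OF norm_fourier_coeff_le _ exp_q]) simp_all
    show "cos_series fourier_coeff 0 u = scriptM T q u" if "u \<in> ball 0 \<epsilon> - {0}" for u
      using exp_2pi_i_in_annulus[OF that \<epsilon>(2,3)] R by (intro scriptM_eq_cos_series[symmetric]) auto
    have "(deriv ^^ r) (cos_series fourier_coeff 0) 0 = cos_series fourier_coeff r 0"
      by (rule higher_deriv_cos_series[OF norm_fourier_coeff_le _ exp_q]) (simp_all add: \<epsilon>(1))
    then show "(deriv ^^ r) (cos_series fourier_coeff 0) 0 = (2 * pi * \<i>) ^ r * M_T T r q"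
      using cos_series_fourier_coeff_at_0[OF assms(5)] by simp
  qed (rule \<epsilon>(1))
qed

end
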